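(* Let $r,l\ge 0$ be integers, let $\boldsymbol{\omega}=(\omega_1,\dots,\omega_r)$ and $\boldsymbol{\alpha}=(\alpha_1,\dots,\alpha_l)$ be tuples of complex numbers with positive real parts, let $a\in\mathbb{C}$ be fixed, and let $k\ge -(r+l)$ be an integer. Then, as $|w|\to\infty$ in any sector $|\arg w|\le \pi/2-\delta$ ($\delta>0$ fixed), $$P_{r+l}\big(k,w+a;(\boldsymbol{\omega},\boldsymbol{\alpha})\big)=\sum_{N=-l}^{r+k} a_{l,N}(a;\boldsymbol{\alpha})\,P_{r}(k-N,w;\boldsymbol{\omega})+O\!\left(\frac{1}{w}\right).$$
   Context: For a tuple $\boldsymbol{\omega}=(\omega_1,\dots,\omega_r)$ of complex numbers with positive real parts put $f_{\boldsymbol{\omega}}(t)=\prod_{j=1}^r(1-e^{-\omega_j t})^{-1}$ (for $r=0$, $\boldsymbol{\omega}=\emptyset$ and $f_\emptyset=1$). The multiple Bernoulli polynomials $a_{r,n}(w;\boldsymbol{\omega})$ ($n\in\mathbb{Z}$) are defined by the Laurent expansion at $t=0$ $$f_{\boldsymbol{\omega}}(t)e^{-wt}=\sum_{n\ge -r}a_{r,n}(w;\boldsymbol{\omega})t^n,$$ with $a_{r,n}=0$ for $n<-r$. Fix $0<\lambda<\min_i|2\pi/\omega_i|$ (any $\lambda>0$ if $r=0$). $I(\lambda,\infty)$ denotes the path consisting of the half-line from $+\infty$ to $\lambda$, the circle $|t|=\lambda$ traversed once in the positive sense, and the half-line from $\lambda$ to $+\infty$; along it $\log t$ is the branch with $\arg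 t=0$ on the incoming half-line, varying continuously along the circle, so $\arg t=2\pi$ on the outgoing half-line. For an integer $k$ and $\mathrm{Re}(w)>0$ define $$P_r(k,w;\boldsymbol{\omega})=\frac{1}{2\pi i}\int_{I(\lambda,\infty)}f_{\boldsymbol{\omega}}(t)e^{-wt}t^{-k-1}\log t\,dt+(\gamma-\pi i)\,a_{r,k}(w;\boldsymbol{\omega}),$$ where $\gamma$ is Euler's constant. $(\boldsymbol{\omega},\boldsymbol{\alpha})$ denotes the concatenated $(r+l)$-tuple. *)

theory Defs
  imports "HOL-Complex_Analysis.Complex_Analysis" "HOL-Library.Landau_Symbols"
begin

definition mb_f :: "complex list \<Rightarrow> complex \<Rightarrow> complex" where
  "mb_f \<omega>s t = (\<Prod>j<length \<omega>s. inverse (1 - exp (- (\<omega>s ! j) * t)))"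

definition mb_a :: "complex list \<Rightarrow> int \<Rightarrow> complex \<Rightarrow> complex" where
  "mb_a \<omega>s n w = fls_nth (laurent_expansion (\<lambda>t. mb_f \<omega>s t * exp (- w * t)) 0) n"

definition mb_F :: "complex list \<Rightarrow> int \<Rightarrow> complex \<Rightarrow> complex \<Rightarrow> complex" where
  "mb_F \<omega>s k w t = mb_f \<omega>s t * exp (- w * t) * t powi (- k - 1)"

text \<open>The contour integral over I(lambda,infinity) of F(t) log t, written piece by piece:
  incoming half-line from +infinity to lambda (arg t = 0),
  circle t = lambda e^{i theta}, theta from 0 to 2 pi (log t = ln lambda + i theta),
  outgoing half-line from lambda to +infinity (arg t = 2 pi).\<close>
definition mb_hankel_log :: "real \<Rightarrow> complex list \<Rightarrow> int \<Rightarrow> complex \<Rightarrow> complex" where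
  "mb_hankel_log lam \<omega>s k w =
     - integral {lam..} (\<lambda>x::real. mb_F \<omega>s k w (of_real x) * of_real (ln x))
     + integral {0..2*pi} (\<lambda>\<theta>::real.
          mb_F \<omega>s k w (of_real lam * exp (\<i> * of_real \<theta>))
          * (of_real (ln lam) + \<i> * of_real \<theta>)
          * (\<i> * of_real lam * exp (\<i> * of_real \<theta>)))
     + integral {lam..} (\<lambda>x::real. mb_F \<omega>s k w (of_real x) * (of_real (ln x) + 2 * pi * \<i>))"

definition mb_P :: "real \<Rightarrow> complex list \<Rightarrow> int \<Rightarrow> complex \<Rightarrow> complex" where
  "mb_P lam \<omega>s k w = mb_hankel_log lam \<omega>s k w / (2 * pi * \<i>)
      + (euler_mascheroni - pi * \<i>) * mb_a \<omega>s k w"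

definition admissible_radius :: "real \<Rightarrow> complex list \<Rightarrow> bool" where
  "admissible_radius lam \<omega>s \<longleftrightarrow> 0 < lam \<and> (\<forall>\<omega>\<in>set \<omega>s. lam < norm (2 * complex_of_real pi / \<omega>))"

definition sector :: "real \<Rightarrow> complex set" where
  "sector \<delta> = {w. w \<noteq> 0 \<and> \<bar>Arg w\<bar> \<le> pi / 2 - \<delta>}"

end

theory Submission
  imports Defs "HOL-Real_Asymp.Real_Asymp"
begin

text \<open>Put \<open>\<Phi>(t) = f\<^sub>\<omega>(t) t\<^sup>-\<^sup>k\<^sup>-\<^sup>1 (f\<^sub>\<alpha>(t) e\<^sup>-\<^sup>a\<^sup>t - \<Sum>\<^sub>N a\<^sub>l\<^sub>,\<^sub>N(a;\<alpha>) t\<^sup>N)\<close>, the sum running over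
  \<open>-l \<le> N \<le> r + k\<close>. Multiplying the Laurent series of \<open>f\<^sub>\<omega>(t)e\<^sup>-\<^sup>w\<^sup>t\<close> and \<open>f\<^sub>\<alpha>(t)e\<^sup>-\<^sup>a\<^sup>t\<close> gives
  \<open>a\<^sub>r\<^sub>+\<^sub>l\<^sub>,\<^sub>k(w + a) = \<Sum>\<^sub>N a\<^sub>l\<^sub>,\<^sub>N(a) a\<^sub>r\<^sub>,\<^sub>k\<^sub>-\<^sub>N(w)\<close>, so the Euler-constant terms cancel and the
  difference of the two sides equals \<open>(2\<pi>i)\<inverse>\<close> times the Hankel integral of \<open>e\<^sup>-\<^sup>w\<^sup>t \<Phi>(t) log t\<close>.
  The subtracted terms are exactly the Laurent polynomial of \<open>f\<^sub>\<alpha>(t)e\<^sup>-\<^sup>a\<^sup>t\<close> up to degree \<open>r + k\<close>,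
  so \<open>\<Phi>\<close> is bounded near \<open>0\<close>. By Cauchy's theorem the Hankel integral does not depend on the
  radius of its circle; letting the radius tend to \<open>0\<close> kills the circle, which leaves
  \<open>2\<pi>i \<integral>\<^sub>0\<^sup>\<infinity> e\<^sup>-\<^sup>w\<^sup>x \<Phi>(x) dx\<close>. Since \<open>|\<Phi>(x)| \<le> M e\<^sup>c\<^sup>x\<close>, this is \<open>O(1 / (Re w - c))\<close>, and
  \<open>Re w \<ge> |w| sin \<delta>\<close> on the sector.\<close>

section \<open>Laurent expansions\<close>

lemma prod_lessThan_length_nth:
  fixes h :: "'a \<Rightarrow> 'b::comm_monoid_mult"
  shows "(\<Prod>j<length xs. h (xs ! j)) = prod_list (map h xs)"
  by (simp add: prod.list_conv_set_nth atLeast0LessThan)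

lemma prod_lessThan_length_append:
  fixes h :: "'a \<Rightarrow> 'b::comm_monoid_mult"
  shows "(\<Prod>j<length (xs @ ys). h ((xs @ ys) ! j))
           = (\<Prod>j<length xs. h (xs ! j)) * (\<Prod>j<length ys. h (ys ! j))"
  by (simp only: prod_lessThan_length_nth map_append prod_list.append)

lemma mb_f_append: "mb_f (xs @ ys) t = mb_f xs t * mb_f ys t"
  unfolding mb_f_def by (rule prod_lessThan_length_append)

definition mb_fls :: "complex list \<Rightarrow> complex fls" where
  "mb_fls \<omega>s = (\<Prod>j<length \<omega>s. inverse (fps_to_fls (1 - fps_exp (- (\<omega>s ! j)))))"

lemma mb_fls_append: "mb_fls (xs @ ys) = mb_fls xs * mb_fls ys"
  unfolding mb_fls_def by (rule prod_lessThan_length_append)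

lemma mb_f_has_laurent_expansion: "mb_f \<omega>s has_laurent_expansion mb_fls \<omega>s"
  unfolding mb_f_def mb_fls_def
  by (intro has_laurent_expansion_prod has_laurent_expansion_inverse has_laurent_expansion_fps
        fps_expansion_intros)

lemma fls_subdegree_one_minus_exp:
  fixes c :: complex
  assumes "c \<noteq> 0"
  shows "fls_subdegree (fps_to_fls (1 - fps_exp c)) = 1"
proof -
  have "subdegree (1 - fps_exp c) = 1"
    by (rule subdegreeI) (use assms in \<open>auto simp: fps_exp_def\<close>)
  thus ?thesis by (simp only: fls_subdegree_fls_to_fps)
qed

lemma
  assumes "0 \<notin> set \<omega>s"
  shows mb_fls_nonzero: "mb_fls \<omega>s \<noteq> 0"
    and fls_subdegree_mb_fls: "fls_subdegree (mb_fls \<omega>s) = - int (length \<omega>s)"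
proof -
  have sub: "fls_subdegree (inverse (fps_to_fls (1 - fps_exp (- (\<omega>s ! j))))) = -1"
    if "j < length \<omega>s" for j
  proof -
    have "\<omega>s ! j \<noteq> 0" using assms nth_mem[OF that] by metis
    thus ?thesis using fls_subdegree_one_minus_exp[of "- (\<omega>s ! j)"] by simp
  qed
  hence nz: "inverse (fps_to_fls (1 - fps_exp (- (\<omega>s ! j)))) \<noteq> 0" if "j < length \<omega>s" for j
    using that by force
  show "mb_fls \<omega>s \<noteq> 0" unfolding mb_fls_def using nz by (auto simp: prod_zero_iff)
  have "fls_subdegree (mb_fls \<omega>s)
          = (\<Sum>j<length \<omega>s. fls_subdegree (inverse (fps_to_fls (1 - fps_exp (- (\<omega>s ! j))))))"
    unfolding mb_fls_def by (rule fls_subdegree_prod) (use nz in auto)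
  also have "\<dots> = (\<Sum>j<length \<omega>s. -1)"
    by (intro sum.cong refl sub) simp
  finally show "fls_subdegree (mb_fls \<omega>s) = - int (length \<omega>s)" by simp
qed

lemma mb_a_eq_fls_nth: "mb_a \<omega>s n w = fls_nth (mb_fls \<omega>s * fps_to_fls (fps_exp (-w))) n"
proof -
  have "(\<lambda>t. mb_f \<omega>s t * exp (- w * t)) has_laurent_expansion mb_fls \<omega>s * fps_to_fls (fps_exp (-w))"
    by (intro has_laurent_expansion_mult mb_f_has_laurent_expansion has_laurent_expansion_fps
          fps_expansion_intros)
  thus ?thesis unfolding mb_a_def by (simp add: laurent_expansion_0_eqI)
qed

lemma fls_subdegree_mb_fls_exp:
  assumes "0 \<notin> set \<omega>s"
  shows "fls_subdegree (mb_fls \<omega>s * fps_to_fls (fps_exp c)) = - int (length \<omega>s)"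
  using mb_fls_nonzero[OF assms] fls_subdegree_mb_fls[OF assms]
  by (simp add: fls_subdegree_fls_to_fps)

lemma mb_a_append_shift:
  assumes "0 \<notin> set \<omega>s" "0 \<notin> set \<alpha>s"
  shows "mb_a (\<omega>s @ \<alpha>s) k (w + a) =
     (\<Sum>N\<in>{- int (length \<alpha>s) .. int (length \<omega>s) + k}. mb_a \<alpha>s N a * mb_a \<omega>s (k - N) w)"
proof -
  define A where "A = mb_fls \<alpha>s * fps_to_fls (fps_exp (-a))"
  define B where "B = mb_fls \<omega>s * fps_to_fls (fps_exp (-w))"
  have exp_sum: "fps_exp (-(w+a)) = fps_exp (-w) * fps_exp (-a)"
    by (simp add: fps_exp_add_mult[symmetric])
  have "mb_a (\<omega>s @ \<alpha>s) k (w + a) = fls_nth (A * B) k"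
    unfolding mb_a_eq_fls_nth A_def B_def mb_fls_append exp_sum fls_times_fps_to_fls
    by (simp add: mult_ac)
  also have "\<dots> = (\<Sum>i = fls_subdegree A .. k - fls_subdegree B. fls_nth A i * fls_nth B (k - i))"
    by (rule fls_times_nth(2))
  also have "\<dots> = (\<Sum>N\<in>{- int (length \<alpha>s) .. int (length \<omega>s) + k}. mb_a \<alpha>s N a * mb_a \<omega>s (k - N) w)"
    using assms unfolding A_def B_def
    by (simp add: fls_subdegree_mb_fls_exp mb_a_eq_fls_nth add_ac)
  finally show ?thesis .
qed

section \<open>Hankel integrals with a logarithm\<close>

definition log_circle_integrand :: "(complex \<Rightarrow> complex) \<Rightarrow> real \<Rightarrow> real \<Rightarrow> complex" where
  "log_circle_integrand \<phi> l \<theta> =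
     \<phi> (of_real l * exp (\<i> * of_real \<theta>)) * (of_real (ln l) + \<i> * of_real \<theta>)
       * (\<i> * of_real l * exp (\<i> * of_real \<theta>))"

definition log_circle_integral :: "real \<Rightarrow> (complex \<Rightarrow> complex) \<Rightarrow> complex" where
  "log_circle_integral lam \<phi> = integral {0..2*pi} (log_circle_integrand \<phi> lam)"

text \<open>The integral of \<open>\<phi>(t) log t\<close> over \<open>I(\<lambda>,\<infinity>)\<close>: the two half-lines carry arguments \<open>0\<close> and
  \<open>2\<pi>\<close>, so together they contribute \<open>2\<pi>i \<integral>\<^sub>\<lambda>\<^sup>\<infinity> \<phi>\<close>.\<close>
definition hankel_log_integral :: "real \<Rightarrow> (complex \<Rightarrow> complex) \<Rightarrow> complex" where
  "hankel_log_integral lam \<phi> =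
     log_circle_integral lam \<phi> + 2 * pi * \<i> * integral {lam..} (\<lambda>x. \<phi> (of_real x))"

text \<open>This radial derivative equals \<open>1/l\<close> times the angular
  derivative of \<open>\<phi>(z) z log z\<close> along \<open>z = l e\<^sup>i\<^sup>\<theta>\<close>, so its integral over a full turn only sees
  the jump \<open>2\<pi>i\<close> of the logarithm.\<close>
definition log_circle_integrand_dr :: "(complex \<Rightarrow> complex) \<Rightarrow> real \<Rightarrow> real \<Rightarrow> complex" where
  "log_circle_integrand_dr \<phi> l \<theta> =
     \<i> * exp (\<i> * of_real \<theta>) *
       (deriv \<phi> (of_real l * exp (\<i> * of_real \<theta>)) * of_real l * exp (\<i> * of_real \<theta>)
          * (of_real (ln l) + \<i> * of_real \<theta>)
        + \<phi> (of_real l * exp (\<i> * of_real \<theta>)) * (1 + of_real (ln l) + \<i> * of_real \<theta>))"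

lemma has_vector_derivative_log_circle_integrand:
  assumes "\<phi> field_differentiable at (of_real l * exp (\<i> * of_real \<theta>))" and "l > 0"
  shows "((\<lambda>l. log_circle_integrand \<phi> l \<theta>) has_vector_derivative log_circle_integrand_dr \<phi> l \<theta>)
           (at l within A)"
proof -
  define E where "E = exp (\<i> * complex_of_real \<theta>)"
  define q where "q z = \<phi> (z * E) * (Ln z + \<i> * of_real \<theta>) * (\<i> * z * E)" for z
  have d1: "((\<lambda>z. \<phi> (z * E)) has_field_derivative deriv \<phi> (of_real l * E) * E) (at (of_real l))"
    using assms(1) unfolding E_def[symmetric] DERIV_deriv_iff_field_differentiable[symmetric]
    by (rule DERIV_chain2) (auto intro!: derivative_eq_intros)
  have d2: "((\<lambda>z. Ln z + \<i> * of_real \<theta>) has_field_derivative inverse (of_real l)) (at (of_real l))"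
    using assms(2)
    by (auto intro!: derivative_eq_intros has_field_derivative_Ln simp: complex_nonpos_Reals_iff)
  have d3: "((\<lambda>z. \<i> * z * E) has_field_derivative \<i> * E) (at (of_real l))"
    by (auto intro!: derivative_eq_intros)
  have "(q has_field_derivative log_circle_integrand_dr \<phi> l \<theta>) (at (of_real l))"
    unfolding q_def
    by (rule DERIV_cong[OF DERIV_mult[OF DERIV_mult[OF d1 d2] d3]])
       (use assms(2) in \<open>simp add: log_circle_integrand_dr_def E_def Ln_of_real field_simps\<close>)
  hence "((\<lambda>x. q (of_real x)) has_vector_derivative log_circle_integrand_dr \<phi> l \<theta>) (at l)"
    by (rule has_vector_derivative_real_field)
  hence "((\<lambda>l. log_circle_integrand \<phi> l \<theta>) has_vector_derivative log_circle_integrand_dr \<phi> l \<theta>) (at l)"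
    by (rule has_vector_derivative_transform_within_open[where S = "{0<..}"])
       (use assms(2) in \<open>auto simp: q_def log_circle_integrand_def E_def Ln_of_real\<close>)
  thus ?thesis by (rule has_vector_derivative_at_within)
qed

lemma has_integral_log_circle_integrand_dr:
  assumes "x > 0" and diff: "\<And>\<theta>. \<phi> field_differentiable at (of_real x * exp (\<i> * of_real \<theta>))"
  shows "(log_circle_integrand_dr \<phi> x has_integral 2 * pi * \<i> * \<phi> (of_real x)) {0..2*pi}"
proof -
  define p where "p z = \<phi> (of_real x * exp (\<i> * z)) * (of_real (ln x) + \<i> * z) * (of_real x * exp (\<i> * z))"
    for z
  have dp: "((\<lambda>\<theta>. p (of_real \<theta>)) has_vector_derivative of_real x * log_circle_integrand_dr \<phi> x \<theta>)
              (at \<theta> within {0..2*pi})" for \<theta>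
  proof -
    define e where "e = exp (\<i> * complex_of_real \<theta>)"
    have d0: "((\<lambda>z. of_real x * exp (\<i> * z)) has_field_derivative of_real x * (\<i> * e)) (at (of_real \<theta>))"
      by (auto intro!: derivative_eq_intros simp: e_def)
    have d1: "((\<lambda>z. \<phi> (of_real x * exp (\<i> * z))) has_field_derivative
                deriv \<phi> (of_real x * e) * (of_real x * (\<i> * e))) (at (of_real \<theta>))"
      by (rule DERIV_chain2[OF _ d0])
         (use diff[of \<theta>] in \<open>simp add: e_def DERIV_deriv_iff_field_differentiable\<close>)
    have d2: "((\<lambda>z. of_real (ln x) + \<i> * z) has_field_derivative \<i>) (at (of_real \<theta>))"
      by (auto intro!: derivative_eq_intros)
    have "(p has_field_derivative of_real x * log_circle_integrand_dr \<phi> x \<theta>) (at (of_real \<theta>))"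
      unfolding p_def
      by (rule DERIV_cong[OF DERIV_mult[OF DERIV_mult[OF d1 d2] d0]])
         (simp add: log_circle_integrand_dr_def e_def algebra_simps)
    thus ?thesis by (rule has_vector_derivative_real_field)
  qed
  have "((\<lambda>\<theta>. of_real x * log_circle_integrand_dr \<phi> x \<theta>) has_integral
          p (of_real (2*pi)) - p (of_real 0)) {0..2*pi}"
    using fundamental_theorem_of_calculus[of 0 "2*pi" "\<lambda>\<theta>. p (of_real \<theta>)"] dp by auto
  also have "p (of_real (2*pi)) - p (of_real 0) = of_real x * (2 * pi * \<i> * \<phi> (of_real x))"
    by (simp add: p_def algebra_simps)
  finally have "((\<lambda>\<theta>. inverse (of_real x) * (of_real x * log_circle_integrand_dr \<phi> x \<theta>)) has_integral
                  inverse (of_real x) * (of_real x * (2 * pi * \<i> * \<phi> (of_real x)))) {0..2*pi}"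
    by (rule has_integral_mult_right)
  thus ?thesis using assms(1) by (simp add: mult.assoc [symmetric])
qed

lemma continuous_on_log_circle_integrand:
  assumes "continuous_on S \<phi>" and "\<And>t. norm t = l \<Longrightarrow> t \<in> S" and "l \<ge> 0"
  shows "continuous_on A (log_circle_integrand \<phi> l)"
proof -
  have "continuous_on A (\<lambda>\<theta>. of_real l * exp (\<i> * complex_of_real \<theta>))"
    by (intro continuous_intros)
  moreover have "(\<lambda>\<theta>. of_real l * exp (\<i> * complex_of_real \<theta>)) ` A \<subseteq> S"
    using assms(2,3) by (auto simp: norm_mult)
  ultimately have "continuous_on A (\<lambda>\<theta>. \<phi> (of_real l * exp (\<i> * complex_of_real \<theta>)))"
    by (rule continuous_on_compose2[OF assms(1)])
  thus ?thesis unfolding log_circle_integrand_def by (intro continuous_intros)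
qed

lemma continuous_on_log_circle_integrand_dr:
  assumes "\<phi> holomorphic_on S" "open S" "0 < l1"
    and "\<And>t. l1 \<le> norm t \<Longrightarrow> norm t \<le> l2 \<Longrightarrow> t \<in> S"
  shows "continuous_on ({l1..l2} \<times> A) (\<lambda>(l, \<theta>). log_circle_integrand_dr \<phi> l \<theta>)"
proof -
  define z where "z p = of_real (fst p) * exp (\<i> * of_real (snd p))" for p :: "real \<times> real"
  have cz: "continuous_on ({l1..l2} \<times> A) z"
    unfolding z_def by (intro continuous_intros)
  have zS: "z ` ({l1..l2} \<times> A) \<subseteq> S"
    using assms(3,4) by (auto simp: z_def norm_mult)
  have "continuous_on ({l1..l2} \<times> A) (\<lambda>p. \<phi> (z p))"
    using assms(1) by (intro continuous_on_compose2[OF _ cz zS] holomorphic_on_imp_continuous_on)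
  moreover have "continuous_on ({l1..l2} \<times> A) (\<lambda>p. deriv \<phi> (z p))"
    using assms(1,2)
    by (intro continuous_on_compose2[OF _ cz zS] holomorphic_on_imp_continuous_on holomorphic_deriv)
  ultimately show ?thesis
    unfolding log_circle_integrand_dr_def case_prod_unfold z_def[symmetric]
    using assms(3) by (intro continuous_intros) (auto simp: z_def)
qed

lemma has_vector_derivative_log_circle_integral:
  assumes holo: "\<phi> holomorphic_on S" and S: "open S" and "0 < l1"
    and ann: "\<And>t. l1 \<le> norm t \<Longrightarrow> norm t \<le> l2 \<Longrightarrow> t \<in> S" and x: "x \<in> {l1..l2}"
  shows "((\<lambda>l. log_circle_integral l \<phi>) has_vector_derivative 2 * pi * \<i> * \<phi> (of_real x))
           (at x within {l1..l2})"
proof -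
  have on_circle: "of_real l * exp (\<i> * of_real \<theta>) \<in> S" if "l \<in> {l1..l2}" for l \<theta>
    using that \<open>0 < l1\<close> by (intro ann) (auto simp: norm_mult)
  have diff: "\<phi> field_differentiable at (of_real l * exp (\<i> * of_real \<theta>))"
    if "l \<in> {l1..l2}" for l \<theta>
    using holomorphic_on_imp_differentiable_at[OF holo S on_circle[OF that]] .
  have "((\<lambda>l. integral (cbox 0 (2*pi)) (log_circle_integrand \<phi> l)) has_vector_derivative
          integral (cbox 0 (2*pi)) (log_circle_integrand_dr \<phi> x)) (at x within {l1..l2})"
  proof (rule leibniz_rule_vector_derivative
      [OF _ _ continuous_on_log_circle_integrand_dr[OF holo S \<open>0 < l1\<close> ann] x])
    show "((\<lambda>l. log_circle_integrand \<phi> l \<theta>) has_vector_derivative log_circle_integrand_dr \<phi> l \<theta>)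
            (at l within {l1..l2})" if "l \<in> {l1..l2}" for l \<theta>
      using that \<open>0 < l1\<close> by (intro has_vector_derivative_log_circle_integrand diff) auto
    show "log_circle_integrand \<phi> l integrable_on cbox 0 (2*pi)" if "l \<in> {l1..l2}" for l
      using that \<open>0 < l1\<close>
      by (intro integrable_continuous continuous_on_log_circle_integrand[of S]
            holomorphic_on_imp_continuous_on holo ann) auto
    show "convex {l1..l2}" by simp
  qed
  moreover have "integral (cbox 0 (2*pi)) (log_circle_integrand_dr \<phi> x) = 2 * pi * \<i> * \<phi> (of_real x)"
    using x \<open>0 < l1\<close> diff[OF x]
    by (simp add: integral_unique[OF has_integral_log_circle_integrand_dr])
  ultimately show ?thesis by (simp add: log_circle_integral_def)
qed

lemma hankel_log_integral_radius_indep: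
  assumes holo: "\<phi> holomorphic_on S" and S: "open S" and "0 < l1" "l1 \<le> l2"
    and ann: "\<And>t. l1 \<le> norm t \<Longrightarrow> norm t \<le> l2 \<Longrightarrow> t \<in> S"
    and int: "(\<lambda>x. \<phi> (of_real x)) integrable_on {l2..}"
  shows "hankel_log_integral l1 \<phi> = hankel_log_integral l2 \<phi>"
proof -
  define c :: complex where "c = 2 * pi * \<i>"
  have "c \<noteq> 0" by (simp add: c_def)
  have "((\<lambda>x. c * \<phi> (of_real x)) has_integral
          log_circle_integral l2 \<phi> - log_circle_integral l1 \<phi>) {l1..l2}"
    unfolding c_def
    by (rule fundamental_theorem_of_calculus[OF \<open>l1 \<le> l2\<close>])
       (rule has_vector_derivative_log_circle_integral[OF holo S \<open>0 < l1\<close> ann])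
  from has_integral_mult_right[OF this, of "inverse c"]
  have "((\<lambda>x. \<phi> (of_real x)) has_integral
          (log_circle_integral l2 \<phi> - log_circle_integral l1 \<phi>) / c) {l1..l2}"
    using \<open>c \<noteq> 0\<close> by (simp add: mult.assoc[symmetric] divide_inverse_commute)
  hence "((\<lambda>x. \<phi> (of_real x)) has_integral
          (log_circle_integral l2 \<phi> - log_circle_integral l1 \<phi>) / c
            + integral {l2..} (\<lambda>x. \<phi> (of_real x))) ({l1..l2} \<union> {l2..})"
    using int \<open>l1 \<le> l2\<close>
    by (intro has_integral_Un) (auto simp: Int_atLeastAtMostR2 max_absorb2)
  moreover have "{l1..l2} \<union> {l2..} = {l1..}" using \<open>l1 \<le> l2\<close> by auto
  ultimately have "c * integral {l1..} (\<lambda>x. \<phi> (of_real x))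
      = log_circle_integral l2 \<phi> - log_circle_integral l1 \<phi> + c * integral {l2..} (\<lambda>x. \<phi> (of_real x))"
    using \<open>c \<noteq> 0\<close> by (simp add: integral_unique distrib_left)
  thus ?thesis
    unfolding hankel_log_integral_def c_def[symmetric] by (simp add: algebra_simps)
qed

lemma norm_log_circle_integrand_le:
  assumes "0 < mu" "\<theta> \<in> {0..2*pi}" and "norm (\<phi> (of_real mu * exp (\<i> * of_real \<theta>))) \<le> M"
  shows "norm (log_circle_integrand \<phi> mu \<theta>) \<le> M * (\<bar>ln mu\<bar> + 2 * pi) * mu"
proof -
  have "norm (of_real (ln mu) + \<i> * of_real \<theta> :: complex) \<le> \<bar>ln mu\<bar> + 2 * pi"
    using norm_triangle_ineq[of "of_real (ln mu) :: complex" "\<i> * of_real \<theta>"] assms(2)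
    by (auto simp: norm_mult)
  hence "norm (\<phi> (of_real mu * exp (\<i> * of_real \<theta>))) * norm (of_real (ln mu) + \<i> * of_real \<theta> :: complex)
           \<le> M * (\<bar>ln mu\<bar> + 2 * pi)"
    using assms(3) by (intro mult_mono) (auto intro: order.trans[OF norm_ge_zero])
  thus ?thesis
    using assms(1) by (simp add: log_circle_integrand_def norm_mult mult_right_mono)
qed

lemma norm_log_circle_integral_le:
  assumes "0 < mu" and "continuous_on S \<phi>" and "\<And>t. norm t = mu \<Longrightarrow> t \<in> S"
    and bd: "\<And>\<theta>. norm (\<phi> (of_real mu * exp (\<i> * of_real \<theta>))) \<le> M"
  shows "norm (log_circle_integral mu \<phi>) \<le> 2 * pi * M * (\<bar>ln mu\<bar> + 2 * pi) * mu"
proof -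
  have "M \<ge> 0" using bd[of 0] by (auto intro: order.trans[OF norm_ge_zero])
  have "log_circle_integrand \<phi> mu integrable_on {0..2*pi}"
    using assms(1-3) by (intro integrable_continuous_real continuous_on_log_circle_integrand) auto
  hence "norm (log_circle_integral mu \<phi>) \<le> M * (\<bar>ln mu\<bar> + 2 * pi) * mu * measure lborel (cbox 0 (2*pi::real))"
    unfolding log_circle_integral_def using \<open>M \<ge> 0\<close> assms(1)
    by (intro has_integral_bound[where f = "log_circle_integrand \<phi> mu"]
          norm_log_circle_integrand_le bd) auto
  thus ?thesis by (simp add: mult_ac)
qed

lemma norm_hankel_log_integral_le:
  assumes holo: "\<phi> holomorphic_on S" and S: "open S" and "0 < lam"
    and punct: "\<And>t. 0 < norm t \<Longrightarrow> norm t \<le> lam \<Longrightarrow> t \<in> S"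
    and int: "(\<lambda>x. \<phi> (of_real x)) integrable_on {lam..}"
    and "\<epsilon> > 0" and bdd: "\<And>t. 0 < norm t \<Longrightarrow> norm t < \<epsilon> \<Longrightarrow> norm (\<phi> t) \<le> M"
    and B: "\<And>mu. 0 < mu \<Longrightarrow> mu \<le> lam \<Longrightarrow> norm (integral {mu..} (\<lambda>x. \<phi> (of_real x))) \<le> B"
  shows "norm (hankel_log_integral lam \<phi>) \<le> 2 * pi * B"
proof -
  have small_radius: "norm (hankel_log_integral lam \<phi>) \<le> 2 * pi * M * (\<bar>ln mu\<bar> + 2 * pi) * mu + 2 * pi * B"
    if mu: "0 < mu" "mu < lam" "mu < \<epsilon>" for mu
  proof -
    have "hankel_log_integral lam \<phi> = hankel_log_integral mu \<phi>"
      using mu by (intro hankel_log_integral_radius_indep[OF holo S, symmetric] int punct) auto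
    moreover have "norm (log_circle_integral mu \<phi>) \<le> 2 * pi * M * (\<bar>ln mu\<bar> + 2 * pi) * mu"
      using mu by (intro norm_log_circle_integral_le[OF _ holomorphic_on_imp_continuous_on[OF holo]]
                    punct bdd) (auto simp: norm_mult)
    moreover have "norm (2 * pi * \<i> * integral {mu..} (\<lambda>x. \<phi> (of_real x))) \<le> 2 * pi * B"
      using B[of mu] mu by (simp add: norm_mult)
    ultimately show ?thesis
      unfolding hankel_log_integral_def by (smt (verit) norm_triangle_ineq)
  qed
  have "((\<lambda>mu. 2 * pi * M * (\<bar>ln mu\<bar> + 2 * pi) * mu + 2 * pi * B) \<longlongrightarrow> 2 * pi * B) (at_right 0)"
    by real_asymp
  moreover have "eventually (\<lambda>mu. mu \<in> {0<..<min lam \<epsilon>}) (at_right (0::real))"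
    using \<open>0 < lam\<close> \<open>\<epsilon> > 0\<close> by (intro eventually_at_right_real) simp
  hence "eventually (\<lambda>mu. norm (hankel_log_integral lam \<phi>)
           \<le> 2 * pi * M * (\<bar>ln mu\<bar> + 2 * pi) * mu + 2 * pi * B) (at_right 0)"
    by eventually_elim (auto intro: small_radius)
  ultimately show ?thesis by (rule tendsto_lowerbound) simp
qed

lemma integral_diff_sum:
  fixes u :: "'a::euclidean_space \<Rightarrow> 'b::real_normed_field"
  assumes "finite A" "u integrable_on T" "\<And>N. N \<in> A \<Longrightarrow> v N integrable_on T"
  shows "integral T (\<lambda>x. u x - (\<Sum>N\<in>A. c N * v N x))
           = integral T u - (\<Sum>N\<in>A. c N * integral T (v N))"
  using assms by (simp add: integral_diff integrable_sum integrable_on_mult_right integral_sum)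

lemma hankel_log_integral_diff_sum:
  assumes "finite A" "0 < lam"
    and "continuous_on S f" "\<And>N. N \<in> A \<Longrightarrow> continuous_on S (g N)"
    and "\<And>t. norm t = lam \<Longrightarrow> t \<in> S"
    and "(\<lambda>x. f (of_real x)) integrable_on {lam..}"
    and "\<And>N. N \<in> A \<Longrightarrow> (\<lambda>x. g N (of_real x)) integrable_on {lam..}"
  shows "hankel_log_integral lam (\<lambda>t. f t - (\<Sum>N\<in>A. c N * g N t))
           = hankel_log_integral lam f - (\<Sum>N\<in>A. c N * hankel_log_integral lam (g N))"
proof -
  have integrand: "log_circle_integrand (\<lambda>t. f t - (\<Sum>N\<in>A. c N * g N t)) lam
          = (\<lambda>\<theta>. log_circle_integrand f lam \<theta> - (\<Sum>N\<in>A. c N * log_circle_integrand (g N) lam \<theta>))"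
    by (simp add: log_circle_integrand_def fun_eq_iff algebra_simps sum_distrib_left sum_distrib_right)
  have circle: "log_circle_integral lam (\<lambda>t. f t - (\<Sum>N\<in>A. c N * g N t))
           = log_circle_integral lam f - (\<Sum>N\<in>A. c N * log_circle_integral lam (g N))"
    unfolding log_circle_integral_def integrand using assms
    by (intro integral_diff_sum integrable_continuous_real continuous_on_log_circle_integrand[of S]) auto
  have ray: "integral {lam..} (\<lambda>x. f (of_real x) - (\<Sum>N\<in>A. c N * g N (of_real x)))
      = integral {lam..} (\<lambda>x. f (of_real x)) - (\<Sum>N\<in>A. c N * integral {lam..} (\<lambda>x. g N (of_real x)))"
    using assms by (intro integral_diff_sum)
  show ?thesis
    unfolding hankel_log_integral_def circle ray
    by (simp add: algebra_simps sum_distrib_left sum.distrib sum_subtractf)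
qed

section \<open>The integrand on the positive real axis\<close>

definition mb_domain :: "complex list \<Rightarrow> complex set" where
  "mb_domain \<omega>s = {t. t \<noteq> 0} \<inter> (\<Inter>\<omega>\<in>set \<omega>s. {t. exp (- \<omega> * t) \<noteq> 1})"

lemma open_mb_domain: "open (mb_domain \<omega>s)"
  unfolding mb_domain_def
  by (intro open_Int open_INT finite_set ballI open_Collect_neq continuous_intros)

lemma exp_neq_1_if_norm_less:
  fixes \<omega> t :: complex
  assumes "\<omega> \<noteq> 0" "t \<noteq> 0" "norm t < norm (2 * complex_of_real pi / \<omega>)"
  shows "exp (- \<omega> * t) \<noteq> 1"
proof
  assume "exp (- \<omega> * t) = 1"
  then obtain n :: int where n: "Re (- \<omega> * t) = 0" "Im (- \<omega> * t) = of_int (2 * n) * pi"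
    by (subst (asm) exp_eq_1) blast
  hence eq: "- \<omega> * t = complex_of_real (of_int (2 * n) * pi) * \<i>"
    by (simp add: complex_eq_iff)
  hence "n \<noteq> 0" using assms(1,2) by auto
  have "norm \<omega> * norm t = norm (- \<omega> * t)" by (simp add: norm_mult)
  also have "\<dots> = \<bar>of_int (2 * n) * pi\<bar>" by (simp only: eq norm_mult norm_ii norm_of_real mult_1_right)
  also have "\<dots> \<ge> 2 * pi"
  proof -
    have "\<bar>real_of_int n\<bar> \<ge> 1" using \<open>n \<noteq> 0\<close> by linarith
    thus ?thesis by (simp add: abs_mult)
  qed
  finally have "norm \<omega> * norm t \<ge> 2 * pi" .
  moreover have "norm \<omega> * norm t < 2 * pi"
    using assms mult_strict_left_mono[OF assms(3), of "norm \<omega>"] by (simp add: norm_divide norm_mult)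
  ultimately show False by simp
qed

lemma of_real_in_mb_domain:
  assumes "\<forall>\<omega>\<in>set \<omega>s. 0 < Re \<omega>" "x > 0"
  shows "complex_of_real x \<in> mb_domain \<omega>s"
  using assms unfolding mb_domain_def by (auto simp: exp_eq_1)

lemma mb_domain_if_admissible_radius:
  assumes "\<forall>\<omega>\<in>set \<omega>s. 0 < Re \<omega>" "admissible_radius lam \<omega>s" "0 < norm t" "norm t \<le> lam"
  shows "t \<in> mb_domain \<omega>s"
proof -
  have "exp (- \<omega> * t) \<noteq> 1" if "\<omega> \<in> set \<omega>s" for \<omega>
    using assms that by (intro exp_neq_1_if_norm_less) (auto simp: admissible_radius_def)
  thus ?thesis using assms(3) by (auto simp: mb_domain_def)
qed

lemma admissible_radius_mono:
  "admissible_radius lam' \<omega>s \<Longrightarrow> 0 < lam \<Longrightarrow> lam \<le> lam' \<Longrightarrow> admissible_radius lam \<omega>s"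
  unfolding admissible_radius_def by force

lemma holomorphic_mb_f: "set \<omega>s \<subseteq> set \<omega>s' \<Longrightarrow> mb_f \<omega>s holomorphic_on mb_domain \<omega>s'"
  unfolding mb_f_def
  by (intro holomorphic_intros) (auto simp: mb_domain_def nth_mem dest!: subsetD[of _ _ "\<omega>s ! _"])

lemma holomorphic_mb_F: "set \<omega>s \<subseteq> set \<omega>s' \<Longrightarrow> mb_F \<omega>s k w holomorphic_on mb_domain \<omega>s'"
  unfolding mb_F_def by (intro holomorphic_intros holomorphic_mb_f) (auto simp: mb_domain_def)

lemma continuous_on_ray_of_real:
  assumes "continuous_on (mb_domain \<omega>s) f" "\<forall>\<omega>\<in>set \<omega>s. 0 < Re \<omega>" "c > 0"
  shows "continuous_on {c..} (\<lambda>x. f (complex_of_real x))"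
  using assms by (intro continuous_on_compose2[OF assms(1)] continuous_intros)
                 (auto intro: of_real_in_mb_domain)

lemma mb_f_bounded_on_ray:
  assumes pos: "\<forall>\<omega>\<in>set \<omega>s. 0 < Re \<omega>" and "mu > 0"
  obtains K where "\<And>x. x \<ge> mu \<Longrightarrow> norm (mb_f \<omega>s (complex_of_real x)) \<le> K"
proof
  fix x assume "x \<ge> mu"
  have "norm (inverse (1 - exp (- \<omega> * complex_of_real x))) \<le> 1 / (1 - exp (- Re \<omega> * mu))"
    if "\<omega> \<in> set \<omega>s" for \<omega>
  proof -
    have "Re \<omega> > 0" using pos that by blast
    hence "exp (- Re \<omega> * x) \<le> exp (- Re \<omega> * mu)" "exp (- Re \<omega> * mu) < 1"
      using \<open>x \<ge> mu\<close> \<open>mu > 0\<close> by auto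
    moreover have "1 - exp (- Re \<omega> * x) \<le> norm (1 - exp (- \<omega> * complex_of_real x))"
      using norm_triangle_ineq2[of 1 "exp (- \<omega> * complex_of_real x)"]
      by (simp add: norm_exp_eq_Re norm_minus_commute)
    ultimately have "0 < 1 - exp (- Re \<omega> * mu)"
      and "1 - exp (- Re \<omega> * mu) \<le> norm (1 - exp (- \<omega> * complex_of_real x))"
      by linarith+
    thus ?thesis by (simp add: norm_inverse le_imp_inverse_le flip: inverse_eq_divide)
  qed
  thus "norm (mb_f \<omega>s (complex_of_real x)) \<le> (\<Prod>j<length \<omega>s. 1 / (1 - exp (- Re (\<omega>s ! j) * mu)))"
    unfolding mb_f_def prod_norm[symmetric] by (intro prod_mono) (auto simp: nth_mem)
qed

lemma norm_powi_of_real_le_exp: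
  assumes "mu > 0"
  obtains C where "\<And>x. x \<ge> mu \<Longrightarrow> norm (complex_of_real x powi m) \<le> C * exp (of_int \<bar>m\<bar> * x)"
proof (cases "m \<ge> 0")
  case True
  show ?thesis
  proof
    fix x assume "x \<ge> mu"
    hence "norm (complex_of_real x powi m) = x ^ nat m"
      using True \<open>mu > 0\<close> by (simp add: power_int_def norm_power)
    also have "\<dots> \<le> exp x ^ nat m"
      using \<open>x \<ge> mu\<close> \<open>mu > 0\<close>
      by (intro power_mono) (auto intro: order.trans[OF _ exp_ge_add_one_self])
    also have "\<dots> = 1 * exp (of_int \<bar>m\<bar> * x)"
      using True by (simp add: exp_of_nat_mult[symmetric])
    finally show "norm (complex_of_real x powi m) \<le> 1 * exp (of_int \<bar>m\<bar> * x)" .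
  qed
next
  case False
  show ?thesis
  proof
    fix x assume "x \<ge> mu"
    hence "norm (complex_of_real x powi m) = inverse x ^ nat (- m)"
      using False \<open>mu > 0\<close> by (simp add: power_int_def norm_power norm_inverse)
    also have "\<dots> \<le> inverse mu ^ nat (- m)"
      using \<open>x \<ge> mu\<close> \<open>mu > 0\<close> by (intro power_mono) (auto simp: field_simps)
    also have "\<dots> \<le> inverse mu ^ nat (- m) * exp (of_int \<bar>m\<bar> * x)"
      using \<open>x \<ge> mu\<close> \<open>mu > 0\<close> by (intro mult_le_cancel_left1[THEN iffD2] impI) auto
    finally show "norm (complex_of_real x powi m) \<le> inverse mu ^ nat (- m) * exp (of_int \<bar>m\<bar> * x)" .
  qed
qed

lemma abs_ln_le_exp:
  fixes mu x :: real
  assumes "0 < mu" "mu \<le> x"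
  shows "\<bar>ln x\<bar> \<le> (\<bar>ln mu\<bar> + 1) * exp x"
proof -
  have "ln mu \<le> ln x" using assms by (intro ln_mono) auto
  moreover have "ln x \<le> x - 1" using assms by (intro ln_le_minus_one) auto
  moreover have "x \<le> exp x" using exp_ge_add_one_self[of x] by linarith
  moreover have "1 \<le> exp x" using assms by simp
  moreover have "\<bar>ln mu\<bar> \<le> \<bar>ln mu\<bar> * exp x"
    using \<open>1 \<le> exp x\<close> by (simp add: mult_le_cancel_left1)
  ultimately show ?thesis by (simp add: algebra_simps)
qed

lemma
  fixes f :: "real \<Rightarrow> complex"
  assumes "continuous_on {c..} f" "b > 0" and bd: "\<And>x. x \<ge> c \<Longrightarrow> norm (f x) \<le> C * exp (- b * x)"
  shows integrable_on_ray_exp_decay: "f integrable_on {c..}"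
    and norm_integral_ray_exp_decay_le: "norm (integral {c..} f) \<le> C * exp (- b * c) / b"
proof -
  have major: "((\<lambda>x. C * exp (- b * x)) has_integral C * (exp (- b * c) / b)) {c..}"
    by (intro has_integral_mult_right has_integral_exp_minus_to_infinity \<open>b > 0\<close>)
  have "f absolutely_integrable_on {c..}"
  proof (rule measurable_bounded_by_integrable_imp_absolutely_integrable)
    show "f \<in> borel_measurable (lebesgue_on {c..})"
      by (rule continuous_imp_measurable_on_sets_lebesgue[OF assms(1)]) auto
  qed (use major bd in \<open>auto simp: has_integral_integrable\<close>)
  thus int: "f integrable_on {c..}" by (rule set_lebesgue_integral_eq_integral(1))
  have "norm (integral {c..} f) \<le> integral {c..} (\<lambda>x. C * exp (- b * x))"
    by (rule integral_norm_bound_integral[OF int]) (use major bd in \<open>auto simp: has_integral_integrable\<close>)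
  also have "\<dots> = C * exp (- b * c) / b" using integral_unique[OF major] by simp
  finally show "norm (integral {c..} f) \<le> C * exp (- b * c) / b" .
qed

lemma mb_F_bound_on_ray:
  assumes pos: "\<forall>\<omega>\<in>set \<omega>s. 0 < Re \<omega>" and "mu > 0"
  shows "\<exists>C\<ge>0. \<forall>x\<ge>mu. \<forall>w.
           norm (mb_F \<omega>s k w (complex_of_real x)) \<le> C * exp (- (Re w - of_int \<bar>k + 1\<bar>) * x)"
proof -
  obtain K where K: "\<And>x. x \<ge> mu \<Longrightarrow> norm (mb_f \<omega>s (complex_of_real x)) \<le> K"
    using mb_f_bounded_on_ray[OF pos \<open>mu > 0\<close>] by blast
  obtain C where C: "\<And>x. x \<ge> mu \<Longrightarrow>
      norm (complex_of_real x powi (- k - 1)) \<le> C * exp (of_int \<bar>- k - 1\<bar> * x)"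
    using norm_powi_of_real_le_exp[OF \<open>mu > 0\<close>, where m = "- k - 1"] by blast
  have "K \<ge> 0" using K[of mu] by (auto intro: order.trans[OF norm_ge_zero])
  have "0 \<le> C * exp (of_int \<bar>- k - 1\<bar> * mu)" using order.trans[OF norm_ge_zero C[of mu]] by simp
  hence "C \<ge> 0" by (simp add: zero_le_mult_iff)
  have "\<bar>- k - 1\<bar> = \<bar>k + 1\<bar>" by linarith
  have "norm (mb_F \<omega>s k w (complex_of_real x)) \<le> (K * C) * exp (- (Re w - of_int \<bar>k + 1\<bar>) * x)"
    if "x \<ge> mu" for x w
  proof -
    have "norm (mb_F \<omega>s k w (complex_of_real x))
            = norm (mb_f \<omega>s (complex_of_real x)) * exp (- Re w * x) * norm (complex_of_real x powi (- k - 1))"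
      unfolding mb_F_def by (simp add: norm_mult norm_exp_eq_Re)
    also have "\<dots> \<le> K * exp (- Re w * x) * (C * exp (of_int \<bar>k + 1\<bar> * x))"
      using \<open>K \<ge> 0\<close> C[OF that] \<open>\<bar>- k - 1\<bar> = \<bar>k + 1\<bar>\<close> that by (intro mult_mono K) auto
    also have "\<dots> = (K * C) * exp (- (Re w - of_int \<bar>k + 1\<bar>) * x)"
      by (simp add: algebra_simps flip: exp_add)
    finally show ?thesis .
  qed
  thus ?thesis using \<open>K \<ge> 0\<close> \<open>C \<ge> 0\<close> by (intro exI[of _ "K * C"]) auto
qed

lemma
  assumes pos: "\<forall>\<omega>\<in>set \<omega>s. 0 < Re \<omega>" and "c > 0" and w: "Re w > of_int \<bar>k + 1\<bar> + 1"
  shows mb_F_integrable_on_ray: "(\<lambda>x. mb_F \<omega>s k w (complex_of_real x)) integrable_on {c..}"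
    and mb_F_ln_integrable_on_ray:
      "(\<lambda>x. mb_F \<omega>s k w (complex_of_real x) * of_real (ln x)) integrable_on {c..}"
proof -
  obtain C where "C \<ge> 0" and C: "\<And>x w. x \<ge> c \<Longrightarrow>
      norm (mb_F \<omega>s k w (complex_of_real x)) \<le> C * exp (- (Re w - of_int \<bar>k + 1\<bar>) * x)"
    using mb_F_bound_on_ray[OF pos \<open>c > 0\<close>, where k = k] by blast
  have cont: "continuous_on {c..} (\<lambda>x. mb_F \<omega>s k w (complex_of_real x))"
    using pos \<open>c > 0\<close>
    by (intro continuous_on_ray_of_real holomorphic_on_imp_continuous_on holomorphic_mb_F) auto
  have "Re w - of_int \<bar>k + 1\<bar> > 0" "Re w - of_int \<bar>k + 1\<bar> - 1 > 0" using w by linarith+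
  show "(\<lambda>x. mb_F \<omega>s k w (complex_of_real x)) integrable_on {c..}"
    by (rule integrable_on_ray_exp_decay[OF cont \<open>Re w - of_int \<bar>k + 1\<bar> > 0\<close> C[of _ w]])
  have bound: "norm (mb_F \<omega>s k w (complex_of_real x) * of_real (ln x))
          \<le> (C * (\<bar>ln c\<bar> + 1)) * exp (- (Re w - of_int \<bar>k + 1\<bar> - 1) * x)" if "x \<ge> c" for x
  proof -
    have "norm (mb_F \<omega>s k w (complex_of_real x) * of_real (ln x))
            \<le> C * exp (- (Re w - of_int \<bar>k + 1\<bar>) * x) * ((\<bar>ln c\<bar> + 1) * exp x)"
      unfolding norm_mult norm_of_real
      using \<open>C \<ge> 0\<close> \<open>c > 0\<close> that by (intro mult_mono C[of _ w] abs_ln_le_exp) auto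
    moreover have "exp (- (Re w - of_int \<bar>k + 1\<bar> - 1) * x) = exp (- (Re w - of_int \<bar>k + 1\<bar>) * x) * exp x"
      by (simp add: algebra_simps flip: exp_add)
    ultimately show ?thesis by (simp add: mult_ac)
  qed
  have "continuous_on {c..} (\<lambda>x. complex_of_real (ln x))"
    using \<open>c > 0\<close> by (intro continuous_intros) auto
  thus "(\<lambda>x. mb_F \<omega>s k w (complex_of_real x) * of_real (ln x)) integrable_on {c..}"
    by (rule integrable_on_ray_exp_decay[OF continuous_on_mult[OF cont] \<open>Re w - of_int \<bar>k + 1\<bar> - 1 > 0\<close> bound])
qed

lemma mb_P_eq_hankel_log_integral:
  assumes pos: "\<forall>\<omega>\<in>set \<omega>s. 0 < Re \<omega>" and "lam > 0" and w: "Re w > of_int \<bar>k + 1\<bar> + 1"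
  shows "mb_P lam \<omega>s k w = hankel_log_integral lam (mb_F \<omega>s k w) / (2 * pi * \<i>)
           + (euler_mascheroni - pi * \<i>) * mb_a \<omega>s k w"
proof -
  have "integral {lam..} (\<lambda>x. mb_F \<omega>s k w (of_real x) * (of_real (ln x) + 2 * pi * \<i>))
          = integral {lam..} (\<lambda>x. mb_F \<omega>s k w (of_real x) * of_real (ln x))
            + integral {lam..} (\<lambda>x. mb_F \<omega>s k w (of_real x)) * (2 * pi * \<i>)"
    unfolding distrib_left integral_mult_left[symmetric]
    by (intro integral_add integrable_on_mult_left mb_F_integrable_on_ray mb_F_ln_integrable_on_ray
          pos \<open>lam > 0\<close> w)
  hence "mb_hankel_log lam \<omega>s k w = hankel_log_integral lam (mb_F \<omega>s k w)"
    unfolding mb_hankel_log_def hankel_log_integral_def log_circle_integral_def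
      log_circle_integrand_def
    by (simp add: algebra_simps)
  thus ?thesis unfolding mb_P_def by simp
qed

section \<open>Exponentially bounded functions\<close>

definition exp_bounded_on :: "real set \<Rightarrow> (real \<Rightarrow> 'a::real_normed_vector) \<Rightarrow> bool" where
  "exp_bounded_on A g \<longleftrightarrow> (\<exists>C c. \<forall>x\<in>A. norm (g x) \<le> C * exp (c * x))"

lemma exp_bounded_onI: "(\<And>x. x \<in> A \<Longrightarrow> norm (g x) \<le> C * exp (c * x)) \<Longrightarrow> exp_bounded_on A g"
  unfolding exp_bounded_on_def by blast

lemma exp_bounded_onE:
  assumes "exp_bounded_on A g"
  obtains C c where "C \<ge> 0" "\<And>x. x \<in> A \<Longrightarrow> norm (g x) \<le> C * exp (c * x)"
proof -
  obtain C c where "\<And>x. x \<in> A \<Longrightarrow> norm (g x) \<le> C * exp (c * x)"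
    using assms unfolding exp_bounded_on_def by blast
  hence "norm (g x) \<le> \<bar>C\<bar> * exp (c * x)" if "x \<in> A" for x
    using that by (smt (verit) exp_gt_zero mult_right_mono)
  thus ?thesis using that[of "\<bar>C\<bar>"] by auto
qed

lemma exp_bounded_on_const: "exp_bounded_on A (\<lambda>_. y)"
  by (rule exp_bounded_onI[of _ _ "norm y" 0]) simp

lemma exp_bounded_on_exp: "exp_bounded_on A (\<lambda>x. exp (b * complex_of_real x))"
  by (rule exp_bounded_onI[of _ _ 1 "Re b"]) (simp add: norm_exp_eq_Re)

lemma exp_bounded_on_mult:
  fixes g h :: "real \<Rightarrow> 'a::real_normed_algebra"
  assumes "exp_bounded_on A g" "exp_bounded_on A h"
  shows "exp_bounded_on A (\<lambda>x. g x * h x)"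
proof -
  obtain C c D d where "C \<ge> 0" "D \<ge> 0"
    and "\<And>x. x \<in> A \<Longrightarrow> norm (g x) \<le> C * exp (c * x)" "\<And>x. x \<in> A \<Longrightarrow> norm (h x) \<le> D * exp (d * x)"
    using assms by (metis exp_bounded_onE)
  hence "norm (g x * h x) \<le> (C * D) * exp ((c + d) * x)" if "x \<in> A" for x
    using that norm_mult_ineq[of "g x" "h x"] mult_mono[of "norm (g x)" _ "norm (h x)"]
    by (fastforce simp: algebra_simps exp_add)
  thus ?thesis by (rule exp_bounded_onI)
qed

lemma exp_bounded_on_add:
  assumes "A \<subseteq> {0..}" "exp_bounded_on A g" "exp_bounded_on A h"
  shows "exp_bounded_on A (\<lambda>x. g x + h x)"
proof -
  obtain C c D d where "C \<ge> 0" "D \<ge> 0"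
    and g: "\<And>x. x \<in> A \<Longrightarrow> norm (g x) \<le> C * exp (c * x)"
    and h: "\<And>x. x \<in> A \<Longrightarrow> norm (h x) \<le> D * exp (d * x)"
    using assms(2,3) by (metis exp_bounded_onE)
  have "norm (g x + h x) \<le> (C + D) * exp (max c d * x)" if "x \<in> A" for x
  proof -
    have "exp (c * x) \<le> exp (max c d * x)" "exp (d * x) \<le> exp (max c d * x)"
      using assms(1) that by (auto intro: mult_right_mono)
    thus ?thesis
      using g[OF that] h[OF that] norm_triangle_ineq[of "g x" "h x"] \<open>C \<ge> 0\<close> \<open>D \<ge> 0\<close>
      by (smt (verit) mult_left_mono distrib_right)
  qed
  thus ?thesis by (rule exp_bounded_onI)
qed

lemma exp_bounded_on_diff:
  assumes "A \<subseteq> {0..}" "exp_bounded_on A g" "exp_bounded_on A h"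
  shows "exp_bounded_on A (\<lambda>x. g x - h x)"
proof -
  have "exp_bounded_on A (\<lambda>x. - h x)"
    using assms(3) by (simp add: exp_bounded_on_def)
  from exp_bounded_on_add[OF assms(1,2) this] show ?thesis by simp
qed

lemma exp_bounded_on_sum:
  assumes "A \<subseteq> {0..}" "\<And>i. i \<in> I \<Longrightarrow> exp_bounded_on A (g i)"
  shows "exp_bounded_on A (\<lambda>x. \<Sum>i\<in>I. g i x)"
  using assms(2)
proof (induction I rule: infinite_finite_induct)
  case (insert i I)
  thus ?case by (simp add: exp_bounded_on_add[OF assms(1)])
qed (simp_all add: exp_bounded_on_const)

lemma exp_bounded_on_powi: "mu > 0 \<Longrightarrow> exp_bounded_on {mu..} (\<lambda>x. complex_of_real x powi m)"
  by (metis norm_powi_of_real_le_exp atLeast_iff exp_bounded_onI)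

lemma exp_bounded_on_mb_f:
  "\<forall>\<omega>\<in>set \<omega>s. 0 < Re \<omega> \<Longrightarrow> mu > 0 \<Longrightarrow> exp_bounded_on {mu..} (\<lambda>x. mb_f \<omega>s (complex_of_real x))"
  by (rule mb_f_bounded_on_ray, assumption+) (rule exp_bounded_onI[of _ _ _ 0], simp)

section \<open>The remainder \<open>\<Phi>\<close>\<close>

definition mb_remainder :: "complex list \<Rightarrow> complex list \<Rightarrow> int \<Rightarrow> complex \<Rightarrow> complex \<Rightarrow> complex" where
  "mb_remainder \<omega>s \<alpha>s k a t = mb_f \<omega>s t * t powi (- k - 1) *
     (mb_f \<alpha>s t * exp (- a * t)
        - (\<Sum>N\<in>{- int (length \<alpha>s) .. int (length \<omega>s) + k}. mb_a \<alpha>s N a * t powi N))"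

definition mb_diff_integrand ::
    "complex list \<Rightarrow> complex list \<Rightarrow> int \<Rightarrow> complex \<Rightarrow> complex \<Rightarrow> complex \<Rightarrow> complex" where
  "mb_diff_integrand \<omega>s \<alpha>s k a w t = mb_F (\<omega>s @ \<alpha>s) k (w + a) t
     - (\<Sum>N\<in>{- int (length \<alpha>s) .. int (length \<omega>s) + k}. mb_a \<alpha>s N a * mb_F \<omega>s (k - N) w t)"

lemma mb_diff_integrand_eq:
  assumes "t \<noteq> 0"
  shows "mb_diff_integrand \<omega>s \<alpha>s k a w t = exp (- w * t) * mb_remainder \<omega>s \<alpha>s k a t"
proof -
  have "t powi (- (k - N) - 1) = t powi (- k - 1) * t powi N" for N
    using power_int_add[of t "- k - 1" N] assms by (simp add: algebra_simps)
  moreover have "exp (- (w + a) * t) = exp (- w * t) * exp (- a * t)"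
    by (simp add: algebra_simps flip: exp_add)
  ultimately show ?thesis
    unfolding mb_diff_integrand_def mb_remainder_def mb_F_def mb_f_append
    by (simp add: algebra_simps sum_distrib_left sum_distrib_right sum_subtractf)
qed

lemma holomorphic_mb_diff_integrand:
  "mb_diff_integrand \<omega>s \<alpha>s k a w holomorphic_on mb_domain (\<omega>s @ \<alpha>s)"
  unfolding mb_diff_integrand_def[abs_def] by (intro holomorphic_intros holomorphic_mb_F) auto

lemma fls_nth_diff_truncation:
  fixes A :: "'a::comm_ring_1 fls"
  assumes "m \<le> fls_subdegree A" "i \<le> n"
  shows "fls_nth (A - (\<Sum>N\<in>{m..n}. fls_const (fls_nth A N) * fls_X_intpow N)) i = 0"
proof -
  have "fls_nth (\<Sum>N\<in>{m..n}. fls_const (fls_nth A N) * fls_X_intpow N) i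
          = (\<Sum>N\<in>{m..n}. if N = i then fls_nth A i else 0)"
    unfolding fls_nth_sum by (intro sum.cong refl) simp
  also have "\<dots> = (if i \<in> {m..n} then fls_nth A i else 0)" by simp
  finally show ?thesis using assms by (auto simp: fls_eq0_below_subdegree)
qed

lemma mb_remainder_tendsto_0:
  assumes "0 \<notin> set \<omega>s" "0 \<notin> set \<alpha>s"
  obtains L where "(mb_remainder \<omega>s \<alpha>s k a \<longlongrightarrow> L) (at 0)"
proof -
  define A where "A = mb_fls \<alpha>s * fps_to_fls (fps_exp (- a))"
  define D where "D = A - (\<Sum>N\<in>{- int (length \<alpha>s) .. int (length \<omega>s) + k}.
                            fls_const (fls_nth A N) * fls_X_intpow N)"
  define T where "T = mb_fls \<omega>s * fls_X_intpow (- k - 1) * D"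
  have "mb_remainder \<omega>s \<alpha>s k a has_laurent_expansion T"
    unfolding mb_remainder_def[abs_def] T_def D_def A_def mb_a_eq_fls_nth
    by (intro has_laurent_expansion_mult has_laurent_expansion_diff has_laurent_expansion_sum
          has_laurent_expansion_cmult_left mb_f_has_laurent_expansion has_laurent_expansion_fps
          fps_expansion_intros has_laurent_expansion_fps_X_power_int)
  moreover have "fls_subdegree T \<ge> 0"
  proof (cases "D = 0")
    case False
    have "fls_subdegree A = - int (length \<alpha>s)"
      unfolding A_def by (rule fls_subdegree_mb_fls_exp[OF assms(2)])
    hence "fls_nth D i = 0" if "i < int (length \<omega>s) + k + 1" for i
      unfolding D_def using that by (intro fls_nth_diff_truncation) auto
    hence "fls_subdegree D \<ge> int (length \<omega>s) + k + 1"
      by (intro fls_subdegree_geI[OF False]) auto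
    moreover have X: "(fls_X_intpow (- k - 1) :: complex fls) \<noteq> 0"
      by (rule fls_X_intpow_nonzero)
    have nz: "mb_fls \<omega>s \<noteq> 0" by (rule mb_fls_nonzero[OF assms(1)])
    hence "mb_fls \<omega>s * fls_X_intpow (- k - 1) \<noteq> 0" using X by (simp only: mult_eq_0_iff) simp
    hence "fls_subdegree T = fls_subdegree (mb_fls \<omega>s)
             + fls_subdegree (fls_X_intpow (- k - 1) :: complex fls) + fls_subdegree D"
      unfolding T_def using fls_subdegree_mult[OF _ False] fls_subdegree_mult[OF nz X] by simp
    ultimately show ?thesis using fls_subdegree_mb_fls[OF assms(1)] by simp
  qed (simp add: T_def)
  ultimately show ?thesis using has_laurent_expansion_imp_tendsto_0 that by blast
qed

lemma mb_remainder_bounded_near_0: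
  assumes "0 \<notin> set \<omega>s" "0 \<notin> set \<alpha>s"
  obtains d K where "d > 0" "\<And>t. t \<noteq> 0 \<Longrightarrow> norm t < d \<Longrightarrow> norm (mb_remainder \<omega>s \<alpha>s k a t) \<le> K"
proof -
  obtain L where "(mb_remainder \<omega>s \<alpha>s k a \<longlongrightarrow> L) (at 0)"
    using mb_remainder_tendsto_0[OF assms] by blast
  hence "((\<lambda>t. norm (mb_remainder \<omega>s \<alpha>s k a t)) \<longlongrightarrow> norm L) (at 0)"
    by (rule tendsto_norm)
  hence "eventually (\<lambda>t. norm (mb_remainder \<omega>s \<alpha>s k a t) < norm L + 1) (at 0)"
    by (rule order_tendstoD) simp
  then obtain d where "d > 0"
    and "\<And>t. t \<noteq> 0 \<Longrightarrow> dist t 0 < d \<Longrightarrow> norm (mb_remainder \<omega>s \<alpha>s k a t) < norm L + 1"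
    unfolding eventually_at by blast
  thus ?thesis using that[of d "norm L + 1"] by fastforce
qed

lemma exp_bounded_on_mb_remainder:
  assumes "\<forall>\<omega>\<in>set \<omega>s. 0 < Re \<omega>" "\<forall>\<alpha>\<in>set \<alpha>s. 0 < Re \<alpha>" "mu > 0"
  shows "exp_bounded_on {mu..} (\<lambda>x. mb_remainder \<omega>s \<alpha>s k a (complex_of_real x))"
  unfolding mb_remainder_def using assms
  by (intro exp_bounded_on_mult exp_bounded_on_diff exp_bounded_on_sum exp_bounded_on_const
        exp_bounded_on_powi exp_bounded_on_mb_f exp_bounded_on_exp) auto

lemma mb_remainder_exp_bound:
  assumes pos: "\<forall>\<omega>\<in>set \<omega>s. 0 < Re \<omega>" "\<forall>\<alpha>\<in>set \<alpha>s. 0 < Re \<alpha>"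
  obtains M c where "M \<ge> 0" "c \<ge> 0"
    "\<And>x. x > 0 \<Longrightarrow> norm (mb_remainder \<omega>s \<alpha>s k a (complex_of_real x)) \<le> M * exp (c * x)"
proof -
  have "0 \<notin> set \<omega>s" "0 \<notin> set \<alpha>s" using pos by force+
  then obtain d K where "d > 0"
    and near: "\<And>t. t \<noteq> 0 \<Longrightarrow> norm t < d \<Longrightarrow> norm (mb_remainder \<omega>s \<alpha>s k a t) \<le> K"
    by (rule mb_remainder_bounded_near_0[where k = k and a = a]) blast
  have "exp_bounded_on {d/2..} (\<lambda>x. mb_remainder \<omega>s \<alpha>s k a (complex_of_real x))"
    using \<open>d > 0\<close> by (intro exp_bounded_on_mb_remainder pos) simp
  then obtain C c where "C \<ge> 0"
    and far: "\<And>x. x \<in> {d/2..} \<Longrightarrow> norm (mb_remainder \<omega>s \<alpha>s k a (complex_of_real x)) \<le> C * exp (c * x)"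
    by (rule exp_bounded_onE) blast
  have "norm (mb_remainder \<omega>s \<alpha>s k a (complex_of_real x)) \<le> max K C * exp (max c 0 * x)"
    if "x > 0" for x
  proof (cases "x < d")
    case True
    have "K \<le> max K C * exp (max c 0 * x)"
      using \<open>C \<ge> 0\<close> \<open>x > 0\<close> by (intro order.trans[OF max.cobounded1 mult_le_cancel_left1[THEN iffD2]]) auto
    thus ?thesis using near[of "of_real x"] True \<open>x > 0\<close> by simp
  next
    case False
    have "C * exp (c * x) \<le> max K C * exp (max c 0 * x)"
      using \<open>C \<ge> 0\<close> \<open>x > 0\<close> by (intro mult_mono) (auto intro: mult_right_mono)
    thus ?thesis using far[of x] False \<open>d > 0\<close> by simp
  qed
  thus ?thesis using that[of "max K C" "max c 0"] \<open>C \<ge> 0\<close> by auto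
qed

lemma mb_P_eq_hankel_log_integral_smaller_radius:
  assumes pos: "\<forall>\<omega>\<in>set \<omega>s. 0 < Re \<omega>" and adm: "admissible_radius lam' \<omega>s"
    and "0 < lam" "lam \<le> lam'" and w: "Re w > of_int \<bar>k + 1\<bar> + 1"
  shows "mb_P lam' \<omega>s k w = hankel_log_integral lam (mb_F \<omega>s k w) / (2 * pi * \<i>)
           + (euler_mascheroni - pi * \<i>) * mb_a \<omega>s k w"
proof -
  have "lam' > 0" using adm by (simp add: admissible_radius_def)
  have "hankel_log_integral lam (mb_F \<omega>s k w) = hankel_log_integral lam' (mb_F \<omega>s k w)"
    using assms \<open>lam' > 0\<close>
    by (intro hankel_log_integral_radius_indep[OF holomorphic_mb_F[OF subset_refl] open_mb_domain]
          mb_domain_if_admissible_radius mb_F_integrable_on_ray) auto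
  thus ?thesis using mb_P_eq_hankel_log_integral[OF pos \<open>lam' > 0\<close> w] by simp
qed

lemma hankel_log_integral_mb_diff_integrand:
  assumes pos_\<omega>: "\<forall>\<omega>\<in>set \<omega>s. 0 < Re \<omega>" and pos_\<alpha>: "\<forall>\<alpha>\<in>set \<alpha>s. 0 < Re \<alpha>"
    and adm: "admissible_radius lam (\<omega>s @ \<alpha>s)"
    and w1: "of_int \<bar>k + 1\<bar> + 1 < Re (w + a)"
    and w2: "\<And>N. N \<in> {- int (length \<alpha>s) .. int (length \<omega>s) + k} \<Longrightarrow> of_int \<bar>k - N + 1\<bar> + 1 < Re w"
  shows "hankel_log_integral lam (mb_diff_integrand \<omega>s \<alpha>s k a w)
           = hankel_log_integral lam (mb_F (\<omega>s @ \<alpha>s) k (w + a))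
             - (\<Sum>N\<in>{- int (length \<alpha>s) .. int (length \<omega>s) + k}.
                  mb_a \<alpha>s N a * hankel_log_integral lam (mb_F \<omega>s (k - N) w))"
  unfolding mb_diff_integrand_def[abs_def]
proof (rule hankel_log_integral_diff_sum[where S = "mb_domain (\<omega>s @ \<alpha>s)"])
  have pos: "\<forall>\<omega>\<in>set (\<omega>s @ \<alpha>s). 0 < Re \<omega>" using pos_\<omega> pos_\<alpha> by auto
  have "lam > 0" using adm by (simp add: admissible_radius_def)
  show "continuous_on (mb_domain (\<omega>s @ \<alpha>s)) (mb_F (\<omega>s @ \<alpha>s) k (w + a))"
    "continuous_on (mb_domain (\<omega>s @ \<alpha>s)) (mb_F \<omega>s (k - N) w)" for N
    by (intro holomorphic_on_imp_continuous_on holomorphic_mb_F; auto)+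
  show "t \<in> mb_domain (\<omega>s @ \<alpha>s)" if "norm t = lam" for t
    using that \<open>lam > 0\<close> by (intro mb_domain_if_admissible_radius[OF pos adm]) auto
  show "(\<lambda>x. mb_F (\<omega>s @ \<alpha>s) k (w + a) (of_real x)) integrable_on {lam..}"
    using pos \<open>lam > 0\<close> w1 by (rule mb_F_integrable_on_ray)
  show "(\<lambda>x. mb_F \<omega>s (k - N) w (of_real x)) integrable_on {lam..}"
    if "N \<in> {- int (length \<alpha>s) .. int (length \<omega>s) + k}" for N
    using pos_\<omega> \<open>lam > 0\<close> w2[OF that] by (rule mb_F_integrable_on_ray)
qed (use adm in \<open>auto simp: admissible_radius_def\<close>)

lemma mb_P_diff_eq_hankel_log_integral:
  assumes pos_\<omega>: "\<forall>\<omega>\<in>set \<omega>s. 0 < Re \<omega>" and pos_\<alpha>: "\<forall>\<alpha>\<in>set \<alpha>s. 0 < Re \<alpha>"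
    and adm1: "admissible_radius lam1 (\<omega>s @ \<alpha>s)" and adm2: "admissible_radius lam2 \<omega>s"
    and lam: "0 < lam" "lam \<le> lam1" "lam \<le> lam2"
    and w: "Re w > norm a + of_int (2 * \<bar>k\<bar> + int (length \<alpha>s) + int (length \<omega>s)) + 2"
  shows "mb_P lam1 (\<omega>s @ \<alpha>s) k (w + a)
           - (\<Sum>N\<in>{- int (length \<alpha>s) .. int (length \<omega>s) + k}. mb_a \<alpha>s N a * mb_P lam2 \<omega>s (k - N) w)
         = hankel_log_integral lam (mb_diff_integrand \<omega>s \<alpha>s k a w) / (2 * pi * \<i>)"
proof -
  define I where "I = {- int (length \<alpha>s) .. int (length \<omega>s) + k}"
  define c where "c = euler_mascheroni - pi * \<i>"
  have pos: "\<forall>\<omega>\<in>set (\<omega>s @ \<alpha>s). 0 < Re \<omega>" using pos_\<omega> pos_\<alpha> by auto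
  have w1: "of_int \<bar>k + 1\<bar> + 1 < Re (w + a)"
    using w abs_Re_le_cmod[of a] by simp
  have w2: "of_int \<bar>k - N + 1\<bar> + 1 < Re w" if "N \<in> I" for N
  proof -
    have "\<bar>k - N + 1\<bar> \<le> 2 * \<bar>k\<bar> + int (length \<alpha>s) + int (length \<omega>s) + 1"
      using that by (auto simp: I_def abs_if)
    hence "real_of_int \<bar>k - N + 1\<bar> \<le> real_of_int (2 * \<bar>k\<bar> + int (length \<alpha>s) + int (length \<omega>s) + 1)"
      by (simp only: of_int_le_iff)
    with w show ?thesis by simp (smt (verit) norm_ge_zero)
  qed
  have P1: "mb_P lam1 (\<omega>s @ \<alpha>s) k (w + a)
              = hankel_log_integral lam (mb_F (\<omega>s @ \<alpha>s) k (w + a)) / (2 * pi * \<i>)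
                + c * mb_a (\<omega>s @ \<alpha>s) k (w + a)"
    unfolding c_def using pos adm1 lam(1,2) w1 by (rule mb_P_eq_hankel_log_integral_smaller_radius)
  have P2: "mb_a \<alpha>s N a * mb_P lam2 \<omega>s (k - N) w
              = mb_a \<alpha>s N a * hankel_log_integral lam (mb_F \<omega>s (k - N) w) / (2 * pi * \<i>)
                + c * (mb_a \<alpha>s N a * mb_a \<omega>s (k - N) w)" if "N \<in> I" for N
    unfolding c_def mb_P_eq_hankel_log_integral_smaller_radius[OF pos_\<omega> adm2 lam(1,3) w2[OF that]]
    by (simp add: algebra_simps)
  have "(\<Sum>N\<in>I. mb_a \<alpha>s N a * mb_P lam2 \<omega>s (k - N) w)
      = (\<Sum>N\<in>I. mb_a \<alpha>s N a * hankel_log_integral lam (mb_F \<omega>s (k - N) w)) / (2 * pi * \<i>)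
        + c * (\<Sum>N\<in>I. mb_a \<alpha>s N a * mb_a \<omega>s (k - N) w)"
    unfolding sum_distrib_left sum_divide_distrib sum.distrib[symmetric] by (rule sum.cong) (simp_all add: P2)
  moreover have "mb_a (\<omega>s @ \<alpha>s) k (w + a) = (\<Sum>N\<in>I. mb_a \<alpha>s N a * mb_a \<omega>s (k - N) w)"
    unfolding I_def using pos_\<omega> pos_\<alpha> by (intro mb_a_append_shift) force+
  moreover have "hankel_log_integral lam (mb_diff_integrand \<omega>s \<alpha>s k a w)
      = hankel_log_integral lam (mb_F (\<omega>s @ \<alpha>s) k (w + a))
        - (\<Sum>N\<in>I. mb_a \<alpha>s N a * hankel_log_integral lam (mb_F \<omega>s (k - N) w))"
    unfolding I_def using lam w2 w1
    by (intro hankel_log_integral_mb_diff_integrand pos_\<omega> pos_\<alpha> admissible_radius_mono[OF adm1])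
       (auto simp: I_def)
  ultimately show ?thesis
    unfolding I_def[symmetric] P1 by (simp add: diff_divide_distrib)
qed

lemma norm_mb_diff_integrand_of_real_le:
  assumes "x > 0" and "norm (mb_remainder \<omega>s \<alpha>s k a (complex_of_real x)) \<le> M * exp (c * x)"
  shows "norm (mb_diff_integrand \<omega>s \<alpha>s k a w (of_real x)) \<le> M * exp (- (Re w - c) * x)"
proof -
  have "norm (mb_diff_integrand \<omega>s \<alpha>s k a w (of_real x))
          = exp (- Re w * x) * norm (mb_remainder \<omega>s \<alpha>s k a (of_real x))"
    using assms(1) by (simp add: mb_diff_integrand_eq norm_mult norm_exp_eq_Re)
  also have "\<dots> \<le> exp (- Re w * x) * (M * exp (c * x))"
    using assms(2) by (intro mult_left_mono) auto
  also have "\<dots> = M * exp (- (Re w - c) * x)" by (simp add: algebra_simps flip: exp_add)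
  finally show ?thesis .
qed

lemma mb_diff_integrand_bounded_near_0:
  assumes "\<forall>\<omega>\<in>set \<omega>s. 0 < Re \<omega>" "\<forall>\<alpha>\<in>set \<alpha>s. 0 < Re \<alpha>"
  obtains d K where "d > 0"
    "\<And>t. 0 < norm t \<Longrightarrow> norm t < d \<Longrightarrow> norm (mb_diff_integrand \<omega>s \<alpha>s k a w t) \<le> K"
proof -
  have "0 \<notin> set \<omega>s" "0 \<notin> set \<alpha>s" using assms by force+
  then obtain d K where "d > 0"
    and near: "\<And>t. t \<noteq> 0 \<Longrightarrow> norm t < d \<Longrightarrow> norm (mb_remainder \<omega>s \<alpha>s k a t) \<le> K"
    by (rule mb_remainder_bounded_near_0[where k = k and a = a]) blast
  have "norm (mb_diff_integrand \<omega>s \<alpha>s k a w t) \<le> exp (norm w * d) * K"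
    if "0 < norm t" "norm t < d" for t
  proof -
    have "norm (exp (- w * t)) \<le> exp (norm w * d)"
      using that complex_Re_le_cmod[of "- w * t"]
      by (simp add: norm_exp_eq_Re norm_mult) (smt (verit) mult_left_mono norm_ge_zero)
    thus ?thesis
      using that near[of t] by (auto simp: mb_diff_integrand_eq norm_mult intro!: mult_mono)
  qed
  thus ?thesis using that \<open>d > 0\<close> by blast
qed

lemma norm_hankel_log_integral_mb_diff_integrand_le:
  assumes pos_\<omega>: "\<forall>\<omega>\<in>set \<omega>s. 0 < Re \<omega>" and pos_\<alpha>: "\<forall>\<alpha>\<in>set \<alpha>s. 0 < Re \<alpha>"
    and adm: "admissible_radius lam (\<omega>s @ \<alpha>s)"
    and bound: "\<And>x. x > 0 \<Longrightarrow> norm (mb_remainder \<omega>s \<alpha>s k a (complex_of_real x)) \<le> M * exp (c * x)"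
    and "M \<ge> 0" and w: "Re w > c"
  shows "norm (hankel_log_integral lam (mb_diff_integrand \<omega>s \<alpha>s k a w)) \<le> 2 * pi * (M / (Re w - c))"
proof -
  define \<phi> where "\<phi> = mb_diff_integrand \<omega>s \<alpha>s k a w"
  have pos: "\<forall>\<omega>\<in>set (\<omega>s @ \<alpha>s). 0 < Re \<omega>" using pos_\<omega> pos_\<alpha> by auto
  have "lam > 0" using adm by (simp add: admissible_radius_def)
  have decay: "norm (\<phi> (of_real x)) \<le> M * exp (- (Re w - c) * x)" if "x > 0" for x
    unfolding \<phi>_def using that bound[OF that] by (rule norm_mb_diff_integrand_of_real_le)
  have cont: "continuous_on {mu..} (\<lambda>x. \<phi> (of_real x))" if "mu > 0" for mu
    unfolding \<phi>_def
    by (rule continuous_on_ray_of_real[OF holomorphic_on_imp_continuous_on[OF holomorphic_mb_diff_integrand]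
          pos that])
  obtain d K where "d > 0" and near: "\<And>t. 0 < norm t \<Longrightarrow> norm t < d \<Longrightarrow> norm (\<phi> t) \<le> K"
    unfolding \<phi>_def by (rule mb_diff_integrand_bounded_near_0[OF pos_\<omega> pos_\<alpha>]) blast
  show ?thesis unfolding \<phi>_def[symmetric]
  proof (rule norm_hankel_log_integral_le[OF _ open_mb_domain \<open>lam > 0\<close> _ _ \<open>d > 0\<close> near])
    show "\<phi> holomorphic_on mb_domain (\<omega>s @ \<alpha>s)"
      unfolding \<phi>_def by (rule holomorphic_mb_diff_integrand)
    show "t \<in> mb_domain (\<omega>s @ \<alpha>s)" if "0 < norm t" "norm t \<le> lam" for t
      using that by (intro mb_domain_if_admissible_radius[OF pos adm])
    show "(\<lambda>x. \<phi> (of_real x)) integrable_on {lam..}"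
      by (rule integrable_on_ray_exp_decay[where b = "Re w - c" and C = M])
         (use \<open>lam > 0\<close> w decay cont in auto)
    show "norm (integral {mu..} (\<lambda>x. \<phi> (of_real x))) \<le> M / (Re w - c)" if "0 < mu" for mu
    proof -
      have "norm (integral {mu..} (\<lambda>x. \<phi> (of_real x))) \<le> M * exp (- (Re w - c) * mu) / (Re w - c)"
        using that w decay by (intro norm_integral_ray_exp_decay_le cont) auto
      also have "\<dots> \<le> M / (Re w - c)"
        using that w \<open>M \<ge> 0\<close> by (intro divide_right_mono mult_left_le) (auto simp: mult_nonpos_nonneg)
      finally show ?thesis .
    qed
  qed
qed

lemma mb_P_diff_bound_half_plane:
  assumes pos_\<omega>: "\<forall>\<omega>\<in>set \<omega>s. 0 < Re \<omega>" and pos_\<alpha>: "\<forall>\<alpha>\<in>set \<alpha>s. 0 < Re \<alpha>"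
    and adm1: "admissible_radius lam1 (\<omega>s @ \<alpha>s)" and adm2: "admissible_radius lam2 \<omega>s"
  obtains M T where "M \<ge> 0" "T \<ge> 0" "\<And>w. Re w > T \<Longrightarrow>
    norm (mb_P lam1 (\<omega>s @ \<alpha>s) k (w + a)
            - (\<Sum>N\<in>{- int (length \<alpha>s) .. int (length \<omega>s) + k}. mb_a \<alpha>s N a * mb_P lam2 \<omega>s (k - N) w))
      \<le> M / (Re w - T)"
proof -
  obtain M c where "M \<ge> 0" "c \<ge> 0"
    and bound: "\<And>x. x > 0 \<Longrightarrow> norm (mb_remainder \<omega>s \<alpha>s k a (complex_of_real x)) \<le> M * exp (c * x)"
    by (rule mb_remainder_exp_bound[OF pos_\<omega> pos_\<alpha>, where k = k and a = a]) blast
  define lam where "lam = min lam1 lam2"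
  have lam: "0 < lam" "lam \<le> lam1" "lam \<le> lam2"
    using adm1 adm2 by (auto simp: lam_def admissible_radius_def)
  have adm: "admissible_radius lam (\<omega>s @ \<alpha>s)"
    using adm1 lam(1,2) by (rule admissible_radius_mono)
  define T where "T = max c (norm a + of_int (2 * \<bar>k\<bar> + int (length \<alpha>s) + int (length \<omega>s)) + 2)"
  have "norm (mb_P lam1 (\<omega>s @ \<alpha>s) k (w + a)
            - (\<Sum>N\<in>{- int (length \<alpha>s) .. int (length \<omega>s) + k}. mb_a \<alpha>s N a * mb_P lam2 \<omega>s (k - N) w))
      \<le> M / (Re w - T)" if w: "Re w > T" for w
  proof -
    have "Re w > c" using w by (simp add: T_def)
    have "norm (mb_P lam1 (\<omega>s @ \<alpha>s) k (w + a)
            - (\<Sum>N\<in>{- int (length \<alpha>s) .. int (length \<omega>s) + k}. mb_a \<alpha>s N a * mb_P lam2 \<omega>s (k - N) w))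
          = norm (hankel_log_integral lam (mb_diff_integrand \<omega>s \<alpha>s k a w)) / (2 * pi)"
      using w by (subst mb_P_diff_eq_hankel_log_integral[OF pos_\<omega> pos_\<alpha> adm1 adm2 lam])
                 (auto simp: T_def norm_divide norm_mult)
    also have "\<dots> \<le> M / (Re w - c)"
      using norm_hankel_log_integral_mb_diff_integrand_le[OF pos_\<omega> pos_\<alpha> adm bound \<open>M \<ge> 0\<close> \<open>Re w > c\<close>]
      by (intro mult_imp_div_pos_le) (simp_all add: mult_ac)
    also have "\<dots> \<le> M / (Re w - T)"
      using w \<open>M \<ge> 0\<close> by (intro divide_left_mono) (auto simp: T_def)
    finally show ?thesis .
  qed
  moreover have "T \<ge> 0" using \<open>c \<ge> 0\<close> by (simp add: T_def)
  ultimately show ?thesis using that \<open>M \<ge> 0\<close> by blast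
qed

lemma sin_mult_norm_le_Re_if_in_sector:
  assumes "w \<in> sector \<delta>" "0 < \<delta>"
  shows "sin \<delta> * norm w \<le> Re w"
proof -
  have w: "w \<noteq> 0" "\<bar>Arg w\<bar> \<le> pi / 2 - \<delta>" using assms by (auto simp: sector_def)
  have "sin \<delta> = cos (pi / 2 - \<delta>)" by (simp add: cos_diff)
  also have "\<dots> \<le> cos \<bar>Arg w\<bar>"
    using w assms by (intro cos_monotone_0_pi_le) auto
  also have "\<dots> = Re w / norm w" using cos_Arg[OF w(1)] by (simp add: abs_if)
  finally show ?thesis using w(1) by (simp add: field_simps)
qed

lemma bigo_inverse_sector_if_half_plane_bound:
  fixes f :: "complex \<Rightarrow> complex"
  assumes "\<delta> > 0" "M \<ge> 0" "T \<ge> 0" and bound: "\<And>w. Re w > T \<Longrightarrow> norm (f w) \<le> M / (Re w - T)"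
  shows "f \<in> O[inf at_infinity (principal (sector \<delta>))](\<lambda>w. 1 / w)"
proof (cases "\<delta> \<le> pi / 2")
  case True
  define s where "s = sin \<delta>"
  have "s > 0" unfolding s_def using True \<open>\<delta> > 0\<close> by (intro sin_gt_zero) auto
  have "eventually (\<lambda>w::complex. norm w \<ge> (2 * T + 1) / s) at_infinity"
    by (rule eventually_at_infinity[THEN iffD2]) blast
  hence "eventually (\<lambda>w. norm (f w) \<le> 2 * M / s * norm (1 / w)) (inf at_infinity (principal (sector \<delta>)))"
    unfolding eventually_inf_principal
  proof (rule eventually_mono, intro impI)
    fix w :: complex assume large: "norm w \<ge> (2 * T + 1) / s" and "w \<in> sector \<delta>"
    hence "w \<noteq> 0" by (simp add: sector_def)
    have "s * norm w \<le> Re w"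
      using sin_mult_norm_le_Re_if_in_sector[OF \<open>w \<in> sector \<delta>\<close> \<open>\<delta> > 0\<close>] by (simp add: s_def)
    moreover have "2 * T + 1 \<le> s * norm w" using large \<open>s > 0\<close> by (simp add: field_simps)
    ultimately have "Re w > T" "s * norm w / 2 \<le> Re w - T" "s * norm w / 2 > 0"
      using \<open>T \<ge> 0\<close> by auto
    have "norm (f w) \<le> M / (Re w - T)" using \<open>Re w > T\<close> by (rule bound)
    also have "\<dots> \<le> M / (s * norm w / 2)"
      using \<open>s * norm w / 2 \<le> Re w - T\<close> \<open>s * norm w / 2 > 0\<close> \<open>M \<ge> 0\<close> by (intro divide_left_mono) auto
    also have "\<dots> = 2 * M / s * norm (1 / w)"
      using \<open>s > 0\<close> \<open>w \<noteq> 0\<close> by (simp add: norm_divide field_simps)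
    finally show "norm (f w) \<le> 2 * M / s * norm (1 / w)" .
  qed
  thus ?thesis by (rule bigoI)
next
  case False
  hence "sector \<delta> = {}" by (auto simp: sector_def)
  thus ?thesis by (intro bigoI[of _ 0]) (simp add: eventually_inf_principal)
qed

theorem theorem1p1:
  fixes \<omega>s \<alpha>s :: "complex list" and a :: complex and k :: int
    and \<delta> lam1 lam2 :: real
  assumes "\<forall>\<omega>\<in>set \<omega>s. 0 < Re \<omega>"
    and "\<forall>\<alpha>\<in>set \<alpha>s. 0 < Re \<alpha>"
    and "k \<ge> - int (length \<omega>s + length \<alpha>s)"
    and "\<delta> > 0"
    and "admissible_radius lam1 (\<omega>s @ \<alpha>s)"
    and "admissible_radius lam2 \<omega>s"
  shows "(\<lambda>w. mb_P lam1 (\<omega>s @ \<alpha>s) k (w + a)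
             - (\<Sum>N\<in>{- int (length \<alpha>s) .. int (length \<omega>s) + k}.
                   mb_a \<alpha>s N a * mb_P lam2 \<omega>s (k - N) w))
         \<in> O[inf at_infinity (principal (sector \<delta>))](\<lambda>w. 1 / w)"
proof -
  obtain M T where "M \<ge> 0" "T \<ge> 0" and bound: "\<And>w. Re w > T \<Longrightarrow>
      norm (mb_P lam1 (\<omega>s @ \<alpha>s) k (w + a)
              - (\<Sum>N\<in>{- int (length \<alpha>s) .. int (length \<omega>s) + k}.
                    mb_a \<alpha>s N a * mb_P lam2 \<omega>s (k - N) w))
        \<le> M / (Re w - T)"
    by (rule mb_P_diff_bound_half_plane[OF assms(1,2,5,6), where k = k and a = a]) blast
  show ?thesis
    by (rule bigo_inverse_sector_if_half_plane_bound[OF \<open>\<delta> > 0\<close> \<open>M \<ge> 0\<close> \<open>T \<ge> 0\<close> bound])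
qed

end
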